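(* Let $B$ be a norming region. For the $B$-biased branching Markov chain, a blue individual located at $x\notin B$ produces $n$ children with probability $d^{\mathrm{s.b.}}_x(n)=n\,d_x(n)/m_x$; conditionally on producing $n$ children, the location of the blue child and the locations of the $n-1$ white children are independent, each white child's location has law $p(x,\cdot)$, and the blue child's location $y$ has law $(p^h_{x,y})_{y\in S}$, where $p^h_{x,y}=\mathbf 1_{B^c}(x)\,q_{x,y}h(y)/h(x)$.
   Context: $S$ countable, $p=(p_{x,y})$ a stochastic matrix on $S$, $(d_x)_{x\in S}$ probability distributions on $\mathbb N_0$, $m_x=\sum_m m\,d_x(m)$, $q_{x,y}=m_xp_{x,y}$, $Q=(q_{x,y})$, Green's function $g(x,y)=\sum_{n\ge0}(Q^n)_{x,y}$, assumed finite. For a branching Markov chain started from one individual at $x$ (each individual at $z$ independently has a $d_z$-distributed number of children at independent $p(z,\cdot)$-distributed locations), $\mathcal H_B$ denotes the set of individuals located in $B$ none of whose strict ancestors is located in $B$. A norming region is a finite $B\subset S$ with $\sum_{y\in B}g(x,y)>0$ for all $x$; $h(x)=\mathbb E^x[\#\mathcal H_B]\in(0,\infty)$. One has $h=Qh$ on $B^c$ and $h=1$ on $B$. The $B$-biased branching Markov chain is a two-type branching Markov chain with types white and blue (state space $S\times\{\mathrm{white},\mathrm{blue}\}$): a white individual, and a blue individual located in $B$, reproduce as in the original chain ($d_x$-distributed number of children at independent $p(x,\cdot)$-locations) and all their children are white. A blue individual at $x\notin B$ produces $n\in\mathbb N$ children with (ordered) locations $y_1,\dots,y_n$ with probability $\frac{1}{h(x)}d_x(n)\prod_{k=1}^np_{x,y_k}\sum_{k=1}^nh(y_k)$;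 given this, the $k$-th child is coloured blue with probability $h(y_k)/\sum_{l=1}^nh(y_l)$ and all other children white. *)

theory Defs
  imports "HOL-Analysis.Analysis"
begin

text \<open>State space S is a countable type 'a; p x y = p_{x,y}; d x n = d_x(n).
  Quantities that may a priori be infinite (means, Q-powers, Green function, h)
  are computed in ennreal.\<close>

definition mean :: "('a \<Rightarrow> nat \<Rightarrow> real) \<Rightarrow> 'a \<Rightarrow> ennreal" where
  "mean d x = (\<Sum>\<^sub>\<infinity>n. of_nat n * ennreal (d x n))"

definition qmat :: "('a \<Rightarrow> nat \<Rightarrow> real) \<Rightarrow> ('a \<Rightarrow> 'a \<Rightarrow> real) \<Rightarrow> 'a \<Rightarrow> 'a \<Rightarrow> ennreal" where
  "qmat d p x y = mean d x * ennreal (p x y)"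

fun Qpow :: "('a \<Rightarrow> nat \<Rightarrow> real) \<Rightarrow> ('a \<Rightarrow> 'a \<Rightarrow> real) \<Rightarrow> nat \<Rightarrow> 'a \<Rightarrow> 'a \<Rightarrow> ennreal" where
  "Qpow d p 0 x y = (if x = y then 1 else 0)"
| "Qpow d p (Suc n) x y = (\<Sum>\<^sub>\<infinity>z. qmat d p x z * Qpow d p n z y)"

definition green :: "('a \<Rightarrow> nat \<Rightarrow> real) \<Rightarrow> ('a \<Rightarrow> 'a \<Rightarrow> real) \<Rightarrow> 'a \<Rightarrow> 'a \<Rightarrow> ennreal" where
  "green d p x y = (\<Sum>\<^sub>\<infinity>n. Qpow d p n x y)"

definition norming_region ::
  "('a \<Rightarrow> nat \<Rightarrow> real) \<Rightarrow> ('a \<Rightarrow> 'a \<Rightarrow> real) \<Rightarrow> 'a set \<Rightarrow> bool" where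
  "norming_region d p B \<longleftrightarrow> finite B \<and> (\<forall>x. (\<Sum>y\<in>B. green d p x y) > 0)"

text \<open>Expected number of individuals in H_B at generation n, i.e. the Q-weight of
  paths x = z_0,...,z_n whose first visit to B is at time n (many-to-one formula).\<close>
fun hgen :: "('a \<Rightarrow> nat \<Rightarrow> real) \<Rightarrow> ('a \<Rightarrow> 'a \<Rightarrow> real) \<Rightarrow> 'a set \<Rightarrow> nat \<Rightarrow> 'a \<Rightarrow> ennreal" where
  "hgen d p B 0 x = (if x \<in> B then 1 else 0)"
| "hgen d p B (Suc n) x = (if x \<in> B then 0 else (\<Sum>\<^sub>\<infinity>y. qmat d p x y * hgen d p B n y))"

text \<open>h(x) = E^x[#H_B].\<close>
definition hfun :: "('a \<Rightarrow> nat \<Rightarrow> real) \<Rightarrow> ('a \<Rightarrow> 'a \<Rightarrow> real) \<Rightarrow> 'a set \<Rightarrow> 'a \<Rightarrow> real" where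
  "hfun d p B x = enn2real (\<Sum>\<^sub>\<infinity>n. hgen d p B n x)"

text \<open>Probability that a blue individual at x (not in B) of the B-biased chain has
  exactly the children with ordered locations ys and that the k-th child (0-based)
  is the blue one: (offspring probability) * (colouring probability).\<close>
definition blue_law ::
  "('a \<Rightarrow> nat \<Rightarrow> real) \<Rightarrow> ('a \<Rightarrow> 'a \<Rightarrow> real) \<Rightarrow> 'a set \<Rightarrow> 'a \<Rightarrow> 'a list \<Rightarrow> nat \<Rightarrow> real" where
  "blue_law d p B x ys k =
     (1 / hfun d p B x) * d x (length ys) * (\<Prod>y\<leftarrow>ys. p x y) * (\<Sum>y\<leftarrow>ys. hfun d p B y)
     * (hfun d p B (ys ! k) / (\<Sum>y\<leftarrow>ys. hfun d p B y))"

definition dsb :: "('a \<Rightarrow> nat \<Rightarrow> real) \<Rightarrow> 'a \<Rightarrow> nat \<Rightarrow> real" where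
  "dsb d x n = real n * d x n / enn2real (mean d x)"

definition ph :: "('a \<Rightarrow> nat \<Rightarrow> real) \<Rightarrow> ('a \<Rightarrow> 'a \<Rightarrow> real) \<Rightarrow> 'a set \<Rightarrow> 'a \<Rightarrow> 'a \<Rightarrow> real" where
  "ph d p B x y = (if x \<notin> B then enn2real (qmat d p x y) * hfun d p B y / hfun d p B x else 0)"

end

theory Submission
  imports Defs
begin

text \<open>Inserting the blue child at any of the \<open>n\<close> positions of a list of white children gives the
  same weight: the factor \<open>\<Sum> h(y\<^sub>k)\<close> of the offspring law cancels against the denominator of
  the colouring probability, leaving \<open>d\<^sub>x(n) p\<^sub>x\<^sub>,\<^sub>y h(y) \<Prod> p\<^sub>x\<^sub>,\<^sub>w / h(x)\<close>. Summing over the \<open>n\<close>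
  positions produces the size bias \<open>n d\<^sub>x(n)\<close>, and the missing factor \<open>m\<^sub>x\<close> is supplied by
  \<open>q\<^sub>x\<^sub>,\<^sub>y = m\<^sub>x p\<^sub>x\<^sub>,\<^sub>y\<close>. The only analytic input is that \<open>q\<^sub>x\<^sub>,\<^sub>y \<le> g(x,y) < \<infinity>\<close>, so that \<open>m\<^sub>x\<close> is
  finite whenever \<open>p\<^sub>x\<^sub>,\<^sub>y > 0\<close>.\<close>

lemma ennreal_le_infsum:
  fixes f :: "'b \<Rightarrow> ennreal"
  shows "f a \<le> infsum f UNIV"
proof -
  have "infsum f {a} \<le> infsum f UNIV"
    by (rule infsum_mono_neutral) (auto simp: nonneg_summable_on_complete)
  then show ?thesis by simp
qed

lemma Qpow_1: "Qpow d p 1 x y = qmat d p x y"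
proof -
  have "Qpow d p 1 x y = (\<Sum>\<^sub>\<infinity>z. qmat d p x z * (if z = y then 1 else 0))"
    by simp
  also have "\<dots> = (\<Sum>\<^sub>\<infinity>z\<in>{y}. qmat d p x z)"
    by (rule infsum_cong_neutral) auto
  finally show ?thesis by simp
qed

lemma qmat_le_green: "qmat d p x y \<le> green d p x y"
  unfolding green_def by (metis Qpow_1 ennreal_le_infsum)

lemma mean_eq_0_imp_zero_offspring:
  assumes "mean d x = 0" and "d x n \<ge> 0" and "n > 0"
  shows "d x n = 0"
proof -
  have "of_nat n * ennreal (d x n) \<le> mean d x"
    unfolding mean_def by (rule ennreal_le_infsum[where f = "\<lambda>n. of_nat n * ennreal (d x n)"])
  with assms show ?thesis by simp
qed

lemma dsb_mult_qmat:
  assumes "qmat d p x y \<noteq> \<infinity>" and "p x y \<ge> 0" and "d x n \<ge> 0"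
  shows "dsb d x n * enn2real (qmat d p x y) = real n * d x n * p x y"
proof (cases "p x y = 0")
  case False
  with assms(1,2) have mean_fin: "mean d x \<noteq> \<infinity>"
    unfolding qmat_def by (auto simp: ennreal_mult_eq_top_iff)
  have q: "enn2real (qmat d p x y) = enn2real (mean d x) * p x y"
    unfolding qmat_def using assms(2) by (simp add: enn2real_mult)
  show ?thesis
  proof (cases "enn2real (mean d x) = 0")
    case True
    with mean_fin have "mean d x = 0" by (simp add: enn2real_eq_0_iff)
    with assms(3) have "real n * d x n = 0"
      using mean_eq_0_imp_zero_offspring by fastforce
    with True show ?thesis by (simp add: q)
  qed (simp add: q dsb_def)
qed (simp add: qmat_def)

lemma hfun_nonneg: "hfun d p B x \<ge> 0"
  unfolding hfun_def by simp

lemma prod_list_insert: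
  fixes f :: "'b \<Rightarrow> 'c::comm_monoid_mult"
  shows "(\<Prod>z\<leftarrow>take k ws @ y # drop k ws. f z) = f y * (\<Prod>z\<leftarrow>ws. f z)"
proof -
  have "(\<Prod>z\<leftarrow>take k ws @ y # drop k ws. f z)
      = f y * ((\<Prod>z\<leftarrow>take k ws. f z) * (\<Prod>z\<leftarrow>drop k ws. f z))"
    by (simp add: ac_simps)
  also have "(\<Prod>z\<leftarrow>take k ws. f z) * (\<Prod>z\<leftarrow>drop k ws. f z) = (\<Prod>z\<leftarrow>ws. f z)"
    by (metis append_take_drop_id map_append prod_list.append)
  finally show ?thesis .
qed

lemma blue_law_insert:
  assumes "k \<le> length ws"
  shows "blue_law d p B x (take k ws @ y # drop k ws) k
       = d x (Suc (length ws)) * p x y * (\<Prod>w\<leftarrow>ws. p x w) * hfun d p B y / hfun d p B x"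
proof -
  let ?ys = "take k ws @ y # drop k ws"
  define S where "S = (\<Sum>z\<leftarrow>?ys. hfun d p B z)"
  have "hfun d p B y \<le> S"
    unfolding S_def by (rule member_le_sum_list) (auto simp: hfun_nonneg)
  then have cancel: "S * (hfun d p B y / S) = hfun d p B y"
    using hfun_nonneg[of d p B y] by (cases "S = 0") auto
  have "length ?ys = Suc (length ws)" and "?ys ! k = y"
    using assms by (simp_all add: nth_append)
  then have "blue_law d p B x ?ys k
      = d x (Suc (length ws)) * (p x y * (\<Prod>w\<leftarrow>ws. p x w)) * (S * (hfun d p B y / S))
        / hfun d p B x"
    unfolding blue_law_def S_def prod_list_insert by (simp add: ac_simps)
  then show ?thesis
    unfolding cancel by (simp add: ac_simps)
qed

theorem mainTheorem2:
  fixes p :: "'a::countable \<Rightarrow> 'a \<Rightarrow> real" and d :: "'a \<Rightarrow> nat \<Rightarrow> real" and B :: "'a set"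
  assumes p_nonneg: "\<And>x y. p x y \<ge> 0"
    and p_stoch: "\<And>x. (p x has_sum 1) UNIV"
    and d_nonneg: "\<And>x n. d x n \<ge> 0"
    and d_distr: "\<And>x. (d x has_sum 1) UNIV"
    and green_fin: "\<And>x y. green d p x y \<noteq> \<infinity>"
    and norming: "norming_region d p B"
    and xB: "x \<notin> B"
  shows "(\<Sum>k\<le>length ws. blue_law d p B x (take k ws @ y # drop k ws) k)
         = dsb d x (Suc (length ws)) * ph d p B x y * (\<Prod>w\<leftarrow>ws. p x w)"
proof -
  let ?n = "Suc (length ws)" and ?h = "hfun d p B"
  have "qmat d p x y \<noteq> \<infinity>"
    using qmat_le_green[of d p x y] green_fin[of x y] by (auto simp: top_unique)
  then have size_bias: "dsb d x ?n * enn2real (qmat d p x y) = real ?n * d x ?n * p x y"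
    using p_nonneg d_nonneg by (rule dsb_mult_qmat)
  have "(\<Sum>k\<le>length ws. blue_law d p B x (take k ws @ y # drop k ws) k)
      = real ?n * (d x ?n * p x y * (\<Prod>w\<leftarrow>ws. p x w) * ?h y / ?h x)"
    by (simp add: blue_law_insert)
  also have "\<dots> = dsb d x ?n * enn2real (qmat d p x y) * ?h y / ?h x * (\<Prod>w\<leftarrow>ws. p x w)"
    unfolding size_bias by (simp add: ac_simps)
  also have "\<dots> = dsb d x ?n * ph d p B x y * (\<Prod>w\<leftarrow>ws. p x w)"
    using xB by (simp add: ph_def)
  finally show ?thesis .
qed

end
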